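(* For any connected graphs $G$ and $H$, $v_s(G)\,v_s(H) \le \gamma_P(G \Box H)$. In addition, if $\gamma_P(G) = v_s(G)$ and $\gamma_P(H) = v_s(H)$, then $\gamma_P(G)\gamma_P(H) \le \gamma_P(G \Box H)$.
   Context: A strong support vertex of a graph is a vertex adjacent to at least two leaves (vertices of degree $1$); $v_s(G)$ denotes the number of strong support vertices of $G$. For $S \subseteq V(G)$: initially all vertices of $S$ and their neighbors are observed; then, repeatedly, any vertex that is the only unobserved neighbor of some observed vertex becomes observed. $S$ is a power dominating set if eventually all vertices are observed; $\gamma_P(G)$ is the minimum size of a power dominating set. $G\Box H$ denotes the Cartesian product: vertex set $V(G)\times V(H)$, with $(g_1,h_1)\sim(g_2,h_2)$ iff ($g_1=g_2$ and $h_1h_2\in E(H)$) or ($h_1=h_2$ and $g_1g_2\in E(G)$). *)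

theory Defs
  imports Main
begin

definition graph :: "'a set \<Rightarrow> ('a \<Rightarrow> 'a \<Rightarrow> bool) \<Rightarrow> bool" where
  "graph V E \<longleftrightarrow> finite V \<and> (\<forall>u v. E u v \<longrightarrow> u \<in> V \<and> v \<in> V)
     \<and> (\<forall>u v. E u v \<longrightarrow> E v u) \<and> (\<forall>v. \<not> E v v)"

definition connected_graph :: "'a set \<Rightarrow> ('a \<Rightarrow> 'a \<Rightarrow> bool) \<Rightarrow> bool" where
  "connected_graph V E \<longleftrightarrow> graph V E \<and> V \<noteq> {} \<and> (\<forall>u\<in>V. \<forall>v\<in>V. E\<^sup>*\<^sup>* u v)"

definition degree :: "'a set \<Rightarrow> ('a \<Rightarrow> 'a \<Rightarrow> bool) \<Rightarrow> 'a \<Rightarrow> nat" where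
  "degree V E v = card {u \<in> V. E v u}"

definition leaf :: "'a set \<Rightarrow> ('a \<Rightarrow> 'a \<Rightarrow> bool) \<Rightarrow> 'a \<Rightarrow> bool" where
  "leaf V E v \<longleftrightarrow> v \<in> V \<and> degree V E v = 1"

definition strong_support :: "'a set \<Rightarrow> ('a \<Rightarrow> 'a \<Rightarrow> bool) \<Rightarrow> 'a \<Rightarrow> bool" where
  "strong_support V E v \<longleftrightarrow> v \<in> V \<and> card {u \<in> V. E v u \<and> leaf V E u} \<ge> 2"

definition vs :: "'a set \<Rightarrow> ('a \<Rightarrow> 'a \<Rightarrow> bool) \<Rightarrow> nat" where
  "vs V E = card {v \<in> V. strong_support V E v}"

(* Set of vertices eventually observed from S: the least set closed under the
   domination step and the propagation rule (monotone, so equal to the final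
   set of the iterative process). *)
inductive_set observed :: "'a set \<Rightarrow> ('a \<Rightarrow> 'a \<Rightarrow> bool) \<Rightarrow> 'a set \<Rightarrow> 'a set"
  for V E S where
  dom_self: "v \<in> S \<Longrightarrow> v \<in> V \<Longrightarrow> v \<in> observed V E S"
| dom_nbr: "v \<in> S \<Longrightarrow> v \<in> V \<Longrightarrow> u \<in> V \<Longrightarrow> E v u \<Longrightarrow> u \<in> observed V E S"
| propagate: "w \<in> observed V E S \<Longrightarrow> u \<in> V \<Longrightarrow> E w u \<Longrightarrow>
     (\<forall>x\<in>V. E w x \<and> x \<noteq> u \<longrightarrow> x \<in> observed V E S) \<Longrightarrow> u \<in> observed V E S"

definition power_dominating :: "'a set \<Rightarrow> ('a \<Rightarrow> 'a \<Rightarrow> bool) \<Rightarrow> 'a set \<Rightarrow> bool" where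
  "power_dominating V E S \<longleftrightarrow> S \<subseteq> V \<and> observed V E S = V"

definition gammaP :: "'a set \<Rightarrow> ('a \<Rightarrow> 'a \<Rightarrow> bool) \<Rightarrow> nat" where
  "gammaP V E = (LEAST k. \<exists>S. power_dominating V E S \<and> card S = k)"

definition cart_vertices :: "'a set \<Rightarrow> 'b set \<Rightarrow> ('a \<times> 'b) set" where
  "cart_vertices VG VH = VG \<times> VH"

definition cart_edges :: "('a \<Rightarrow> 'a \<Rightarrow> bool) \<Rightarrow> ('b \<Rightarrow> 'b \<Rightarrow> bool) \<Rightarrow>
    ('a \<times> 'b) \<Rightarrow> ('a \<times> 'b) \<Rightarrow> bool" where
  "cart_edges EG EH = (\<lambda>(g1, h1) (g2, h2). (g1 = g2 \<and> EH h1 h2) \<or> (h1 = h2 \<and> EG g1 g2))"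

end

theory Submission
  imports Defs
begin

text \<open>Let \<open>g\<close> and \<open>h\<close> be strong support vertices with leaf neighbours \<open>l\<^sub>1, l\<^sub>2\<close> and \<open>m\<^sub>1, m\<^sub>2\<close>.
  In \<open>G \<box> H\<close> each vertex \<open>(l\<^sub>i, m\<^sub>j)\<close> has exactly the two neighbours \<open>(l\<^sub>i, h)\<close> and \<open>(g, m\<^sub>j)\<close>,
  and each of these has two unobserved neighbours in the block \<open>{l\<^sub>1, l\<^sub>2} \<times> {m\<^sub>1, m\<^sub>2}\<close> as long
  as the block is unobserved. So propagation never enters the block, and a power dominating
  set must meet \<open>{g, l\<^sub>1, l\<^sub>2} \<times> {h, m\<^sub>1, m\<^sub>2}\<close>. Collapsing every leaf onto its neighbour maps
  a power dominating set onto a superset of the pairs of strong support vertices, whence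
  \<open>v\<^sub>s(G) v\<^sub>s(H) \<le> \<gamma>\<^sub>P(G \<box> H)\<close>; the second claim is a restatement of the first.\<close>

lemma observed_subset: "observed V E S \<subseteq> V"
proof
  show "x \<in> V" if "x \<in> observed V E S" for x
    using that by (induction rule: observed.induct) auto
qed

lemma power_dominating_self: "power_dominating V E V"
  unfolding power_dominating_def by (auto intro: observed.dom_self dest: observed_subset[THEN subsetD])

lemma gammaP_attained:
  assumes "finite V"
  obtains S where "power_dominating V E S" "card S = gammaP V E" "finite S"
proof -
  have "\<exists>S. power_dominating V E S \<and> card S = gammaP V E"
    unfolding gammaP_def by (rule LeastI_ex) (use power_dominating_self in blast)
  then obtain S where "power_dominating V E S" "card S = gammaP V E" by blast
  moreover from this(1) have "finite S"
    using assms unfolding power_dominating_def by (metis finite_subset)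
  ultimately show thesis by (rule that)
qed

lemma leaf_neighbour_unique:
  assumes "leaf V E l" "x \<in> V" "y \<in> V" "E l x" "E l y"
  shows "x = y"
proof -
  have "card {u \<in> V. E l u} = 1"
    using assms(1) unfolding leaf_def degree_def by simp
  then obtain z where "{u \<in> V. E l u} = {z}" by (rule card_1_singletonE)
  then show ?thesis using assms(2-5) by (metis (mono_tags, lifting) mem_Collect_eq singletonD)
qed

lemma strong_support_obtain_leaves:
  assumes "strong_support V E g"
  obtains l1 l2 where "l1 \<noteq> l2" "l1 \<in> V" "l2 \<in> V" "E g l1" "E g l2" "leaf V E l1" "leaf V E l2"
proof -
  have "Suc 1 \<le> card {u \<in> V. E g u \<and> leaf V E u}"
    using assms unfolding strong_support_def by simp
  then obtain a B where "{u \<in> V. E g u \<and> leaf V E u} = insert a B" "a \<notin> B" "1 \<le> card B"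
    unfolding card_le_Suc_iff by blast
  moreover from this(3) obtain b where "b \<in> B" by fastforce
  ultimately show thesis using that[of a b] by blast
qed

lemma leaf_not_strong_support:
  assumes "graph V E" "leaf V E l"
  shows "\<not> strong_support V E l"
proof -
  have "card {u \<in> V. E l u \<and> leaf V E u} \<le> card {u \<in> V. E l u}"
    using assms(1) unfolding graph_def by (intro card_mono) auto
  also have "\<dots> = 1"
    using assms(2) unfolding leaf_def degree_def by simp
  finally show ?thesis unfolding strong_support_def by simp
qed

definition support_of :: "'a set \<Rightarrow> ('a \<Rightarrow> 'a \<Rightarrow> bool) \<Rightarrow> 'a \<Rightarrow> 'a" where
  "support_of V E x = (if leaf V E x then (THE g. g \<in> V \<and> E x g) else x)"

lemma support_of_leaf:
  assumes "leaf V E l" "g \<in> V" "E l g"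
  shows "support_of V E l = g"
  unfolding support_of_def
  using assms leaf_neighbour_unique[OF assms(1)] by (auto intro: the_equality)

lemma support_of_strong_support_star:
  assumes "graph V E" "strong_support V E g" "x \<in> insert g {l \<in> V. E g l \<and> leaf V E l}"
  shows "support_of V E x = g"
proof (cases "x = g")
  case True
  then show ?thesis
    using leaf_not_strong_support[OF assms(1)] assms(2) unfolding support_of_def by auto
next
  case False
  then have "leaf V E x" "g \<in> V" "E x g"
    using assms unfolding graph_def strong_support_def by auto
  then show ?thesis by (rule support_of_leaf)
qed

lemma cart_edges_into_leaf_pair:
  assumes "graph VG EG" "graph VH EH"
    and "leaf VG EG a" "EG g a" "g \<in> VG" "leaf VH EH b" "EH h b" "h \<in> VH"
    and "c \<in> VG" "d \<in> VH" "cart_edges EG EH (c, d) (a, b)"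
  shows "(c = a \<and> d = h) \<or> (c = g \<and> d = b)"
proof -
  have "EG a c \<Longrightarrow> c = g" "EH b d \<Longrightarrow> d = h"
    using assms leaf_neighbour_unique[OF assms(3), of c g] leaf_neighbour_unique[OF assms(6), of d h]
    unfolding graph_def by blast+
  moreover have "EG c a \<Longrightarrow> EG a c" "EH d b \<Longrightarrow> EH b d"
    using assms(1,2) unfolding graph_def by blast+
  ultimately show ?thesis using assms(11) unfolding cart_edges_def by auto
qed

lemma leaf_block_unobserved:
  assumes gG: "graph VG EG" and gH: "graph VH EH"
    and G: "l1 \<noteq> l2" "l1 \<in> VG" "l2 \<in> VG" "EG g l1" "EG g l2" "leaf VG EG l1" "leaf VG EG l2" "g \<in> VG"
    and H: "m1 \<noteq> m2" "m1 \<in> VH" "m2 \<in> VH" "EH h m1" "EH h m2" "leaf VH EH m1" "leaf VH EH m2" "h \<in> VH"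
    and S: "S \<inter> ({g, l1, l2} \<times> {h, m1, m2}) = {}"
    and x: "x \<in> observed (VG \<times> VH) (cart_edges EG EH) S"
  shows "x \<notin> {l1, l2} \<times> {m1, m2}"
proof -
  have nbrs: "(c = a \<and> d = h) \<or> (c = g \<and> d = b)"
    if "a \<in> {l1, l2}" "b \<in> {m1, m2}" "(c, d) \<in> VG \<times> VH" "cart_edges EG EH (c, d) (a, b)"
    for a b c d
  proof (rule cart_edges_into_leaf_pair[OF gG gH])
    show "leaf VG EG a" "EG g a" using that(1) G(4-7) by auto
    show "leaf VH EH b" "EH h b" using that(2) H(4-7) by auto
  qed (use that G(8) H(8) in auto)
  from x show ?thesis
  proof (induction rule: observed.induct)
    case (dom_self v)
    then show ?case using S by auto
  next
    case (dom_nbr v u)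
    show ?case
    proof
      assume "u \<in> {l1, l2} \<times> {m1, m2}"
      then obtain a b where ab: "u = (a, b)" "a \<in> {l1, l2}" "b \<in> {m1, m2}" by blast
      obtain c d where v: "v = (c, d)" by fastforce
      have "(c = a \<and> d = h) \<or> (c = g \<and> d = b)"
        using nbrs[OF ab(2,3)] dom_nbr.hyps(2,4) unfolding ab(1) v by blast
      then show False using S dom_nbr.hyps(1) ab v by auto
    qed
  next
    case (propagate w u)
    show ?case
    proof
      assume "u \<in> {l1, l2} \<times> {m1, m2}"
      then obtain a b where ab: "u = (a, b)" "a \<in> {l1, l2}" "b \<in> {m1, m2}" by blast
      obtain c d where w: "w = (c, d)" by fastforce
      have "(c, d) \<in> VG \<times> VH"
        using observed_subset[THEN subsetD, OF propagate.hyps(1)] unfolding w .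
      then have "(c = a \<and> d = h) \<or> (c = g \<and> d = b)"
        using nbrs ab(2,3) propagate.hyps(3) unfolding ab(1) w by blast
      \<comment> \<open>\<open>w\<close> has a second neighbour in the block, still unobserved, so it cannot force \<open>u\<close>\<close>
      then obtain u' where u': "u' \<in> {l1, l2} \<times> {m1, m2}" "u' \<noteq> u" "cart_edges EG EH w u'"
      proof (elim disjE conjE)
        assume "c = a" "d = h"
        obtain b' where "b' \<in> {m1, m2}" "b' \<noteq> b" using H(1) by blast
        then show thesis using that[of "(a, b')"] ab w \<open>c = a\<close> \<open>d = h\<close> H(4,5)
          unfolding cart_edges_def by auto
      next
        assume "c = g" "d = b"
        obtain a' where "a' \<in> {l1, l2}" "a' \<noteq> a" using G(1) by blast
        then show thesis using that[of "(a', b)"] ab w \<open>c = g\<close> \<open>d = b\<close> G(4,5)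
          unfolding cart_edges_def by auto
      qed
      moreover have "u' \<in> VG \<times> VH" using u'(1) G H by auto
      ultimately show False using propagate.IH(2) by blast
    qed
  qed
qed

lemma power_dominating_collapses_onto_support_pair:
  assumes gG: "graph VG EG" and gH: "graph VH EH"
    and pd: "power_dominating (cart_vertices VG VH) (cart_edges EG EH) S"
    and g: "strong_support VG EG g" and h: "strong_support VH EH h"
  shows "\<exists>x \<in> S. support_of VG EG (fst x) = g \<and> support_of VH EH (snd x) = h"
proof -
  obtain l1 l2 where G: "l1 \<noteq> l2" "l1 \<in> VG" "l2 \<in> VG" "EG g l1" "EG g l2" "leaf VG EG l1" "leaf VG EG l2"
    using strong_support_obtain_leaves[OF g] .
  obtain m1 m2 where H: "m1 \<noteq> m2" "m1 \<in> VH" "m2 \<in> VH" "EH h m1" "EH h m2" "leaf VH EH m1" "leaf VH EH m2"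
    using strong_support_obtain_leaves[OF h] .
  have "g \<in> VG" "h \<in> VH" using g h unfolding strong_support_def by auto
  have "(l1, m1) \<in> observed (VG \<times> VH) (cart_edges EG EH) S"
    using pd G H unfolding power_dominating_def cart_vertices_def by auto
  then have "S \<inter> ({g, l1, l2} \<times> {h, m1, m2}) \<noteq> {}"
    using leaf_block_unobserved[OF gG gH G \<open>g \<in> VG\<close> H \<open>h \<in> VH\<close>] by blast
  then obtain x where "x \<in> S" "fst x \<in> {g, l1, l2}" "snd x \<in> {h, m1, m2}" by auto
  moreover have "support_of VG EG (fst x) = g" "support_of VH EH (snd x) = h"
    using calculation support_of_strong_support_star[OF gG g] support_of_strong_support_star[OF gH h] G H
    by auto
  ultimately show ?thesis by blast
qed

lemma vs_mult_le_card_power_dominating: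
  assumes "graph VG EG" "graph VH EH" "finite S"
    and "power_dominating (cart_vertices VG VH) (cart_edges EG EH) S"
  shows "vs VG EG * vs VH EH \<le> card S"
proof -
  let ?collapse = "\<lambda>x. (support_of VG EG (fst x), support_of VH EH (snd x))"
  have "{v \<in> VG. strong_support VG EG v} \<times> {v \<in> VH. strong_support VH EH v} \<subseteq> ?collapse ` S"
    using power_dominating_collapses_onto_support_pair[OF assms(1,2,4)] by force
  then have "vs VG EG * vs VH EH \<le> card (?collapse ` S)"
    unfolding vs_def card_cartesian_product[symmetric] using assms(3) by (intro card_mono) auto
  also have "\<dots> \<le> card S" using assms(3) by (rule card_image_le)
  finally show ?thesis .
qed

theorem lemma3p5:
  fixes VG :: "'a set" and EG :: "'a \<Rightarrow> 'a \<Rightarrow> bool"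
    and VH :: "'b set" and EH :: "'b \<Rightarrow> 'b \<Rightarrow> bool"
  assumes "connected_graph VG EG" and "connected_graph VH EH"
  shows "vs VG EG * vs VH EH \<le> gammaP (cart_vertices VG VH) (cart_edges EG EH)
         \<and> (gammaP VG EG = vs VG EG \<and> gammaP VH EH = vs VH EH \<longrightarrow>
           gammaP VG EG * gammaP VH EH \<le> gammaP (cart_vertices VG VH) (cart_edges EG EH))"
proof -
  have gG: "graph VG EG" and gH: "graph VH EH"
    using assms unfolding connected_graph_def by auto
  then have "finite (cart_vertices VG VH)"
    unfolding graph_def cart_vertices_def by auto
  then obtain S where pd: "power_dominating (cart_vertices VG VH) (cart_edges EG EH) S"
      and card: "card S = gammaP (cart_vertices VG VH) (cart_edges EG EH)" and "finite S"
    by (rule gammaP_attained)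
  have "vs VG EG * vs VH EH \<le> card S"
    by (rule vs_mult_le_card_power_dominating[OF gG gH \<open>finite S\<close> pd])
  then have "vs VG EG * vs VH EH \<le> gammaP (cart_vertices VG VH) (cart_edges EG EH)"
    unfolding card .
  then show ?thesis by simp
qed

end
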